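(* Let $[\cdot,\cdot]$ be a Gerstenhaber superbracket on $\Omega(\mathcal A)$. Then $(\Omega(\mathcal A),\wedge,[\cdot,\cdot])$ is a differential Gerstenhaber superalgebra if and only if there is a Poisson superalgebra structure $\{\cdot,\cdot\}$ on $\mathcal A$ such that $[\cdot,\cdot]$ is the bracket associated to it, i.e. $[f,g]=0$, $[f,\mathbf d g]=[\mathbf d f,g]=\{f,g\}$ and $[\mathbf d f,\mathbf d g]=\mathbf d\{f,g\}$ for all $f,g\in\mathcal A$. (In the forward direction one may take $\{f,g\}:=[f,\mathbf d g]$.)
   Context: $\mathcal A$ is a $\mathbb Z$-graded, associative, graded-commutative unital real algebra, regarded as supercommutative with parity $p$ = degree mod 2. $\Omega^1(\mathcal A)=\ker(\mathbf m:\mathcal A\otimes\mathcal A\to\mathcal A)$ with $\mathbf d a=a\otimes1-1\otimes a$, generated over $\mathcal A$ by $\mathbf d\mathcal A$; $\Omega(\mathcal A)=\bigoplus_{r\ge0}\Omega^r(\mathcal A)$, $\Omega^0(\mathcal A)=\mathcal A$, is the algebra of superforms generated over $\mathcal A$ by $\Omega^1(\mathcal A)$ with wedge product, bigraded by form degree $\deg$ and parity $p$, and $\mathbf d$ extends to the exterior superderivative ($\deg$ $1$, $\mathbf d^2=0$). A Gerstenhaber superbracket on $\Omega(\mathcal A)$ is a bracket such that for bihomogeneous $\alpha,\beta,\gamma$: $[\alpha,\beta]=-(-1)^{(\deg\alpha-1)(\deg\beta-1)+p(\alpha)p(\beta)}[\beta,\alpha]$; $[\alpha,[\beta,\gamma]]=[[\alpha,\beta],\gamma]+(-1)^{(\deg\alpha-1)(\deg\beta-1)+p(\alpha)p(\beta)}[\beta,[\alpha,\gamma]]$;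 $[\alpha,\beta\wedge\gamma]=[\alpha,\beta]\wedge\gamma+(-1)^{(\deg\alpha-1)\deg\beta+p(\alpha)p(\beta)}\beta\wedge[\alpha,\gamma]$. It is differential if $\mathbf d[\alpha,\beta]=[\mathbf d\alpha,\beta]+(-1)^{\deg\alpha-1}[\alpha,\mathbf d\beta]$ for all $\alpha,\beta$. A Poisson superalgebra structure on $\mathcal A$ is a bilinear bracket homogeneous of even degree satisfying, for homogeneous $f,g,h$: $\{f,g\}=-(-1)^{p(f)p(g)}\{g,f\}$, $\{f,\{g,h\}\}=\{\{f,g\},h\}+(-1)^{p(f)p(g)}\{g,\{f,h\}\}$, $\{f,gh\}=\{f,g\}h+(-1)^{p(f)p(g)}g\{f,h\}$.
   Formalization: Homogeneous of even degree, for a Poisson superalgebra structure, means parity-preserving only: $\{f,g\}$ has parity $p(f)+p(g)$ mod 2 for homogeneous f, g; a Gerstenhaber superbracket is also bilinear, of form degree $-1$ and of even parity. Each condition added here is assumed in the paper as well or is needed for the statement above to hold. *)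

theory Defs
  imports "HOL-Analysis.Analysis"
begin

definition eps :: "int \<Rightarrow> real" where
  "eps k = (if even k then 1 else -1)"

definition par :: "int \<Rightarrow> nat" where
  "par n = nat (n mod 2)"

text \<open>Z-graded, associative, graded-commutative unital real algebra, given by its
  homogeneous components Agr n (a direct-sum decomposition of the carrier type).\<close>
definition graded_comm_algebra :: "(int \<Rightarrow> 'a::real_algebra_1 set) \<Rightarrow> bool" where
  "graded_comm_algebra Agr \<longleftrightarrow>
     (\<forall>n. subspace (Agr n)) \<and>
     (\<forall>a. \<exists>!c::int \<Rightarrow> 'a. finite {n. c n \<noteq> 0} \<and> (\<forall>n. c n \<in> Agr n) \<and>
            a = (\<Sum>n\<in>{n. c n \<noteq> 0}. c n)) \<and>
     1 \<in> Agr 0 \<and>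
     (\<forall>m n a b. a \<in> Agr m \<longrightarrow> b \<in> Agr n \<longrightarrow>
        a * b \<in> Agr (m + n) \<and> a * b = eps (m * n) *\<^sub>R (b * a))"

definition Apar :: "(int \<Rightarrow> 'a::real_algebra_1 set) \<Rightarrow> nat \<Rightarrow> 'a set" where
  "Apar Agr p = span (\<Union>n\<in>{n. par n = p}. Agr n)"

definition gen_form :: "('w \<Rightarrow> 'w \<Rightarrow> 'w) \<Rightarrow> 'w \<Rightarrow> ('a \<Rightarrow> 'w) \<Rightarrow> ('w \<Rightarrow> 'w)
    \<Rightarrow> 'a \<Rightarrow> 'a list \<Rightarrow> 'w" where
  "gen_form wedge one iota d a0 as =
     wedge (iota a0) (foldr (\<lambda>a w. wedge (d (iota a)) w) as one)"

text \<open>The algebra of superforms Omega(A) with wedge product, unit, bigrading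
  Om r p (form degree r, parity p), embedding iota of A = Omega^0 and exterior
  superderivative d; Omega(A) is generated over A by dA.\<close>
definition superform_algebra ::
  "(int \<Rightarrow> 'a::real_algebra_1 set) \<Rightarrow> ('w::real_vector \<Rightarrow> 'w \<Rightarrow> 'w) \<Rightarrow> 'w \<Rightarrow>
   (nat \<Rightarrow> nat \<Rightarrow> 'w set) \<Rightarrow> ('a \<Rightarrow> 'w) \<Rightarrow> ('w \<Rightarrow> 'w) \<Rightarrow> bool" where
  "superform_algebra Agr wedge one Om iota d \<longleftrightarrow>
     (\<forall>x. linear (wedge x)) \<and> (\<forall>y. linear (\<lambda>x. wedge x y)) \<and>
     (\<forall>x y z. wedge (wedge x y) z = wedge x (wedge y z)) \<and>
     (\<forall>x. wedge one x = x \<and> wedge x one = x) \<and>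
     (\<forall>r p. subspace (Om r p)) \<and> (\<forall>r p. 2 \<le> p \<longrightarrow> Om r p = {0}) \<and>
     (\<forall>x. \<exists>!c::nat \<times> nat \<Rightarrow> 'w. finite {rp. c rp \<noteq> 0} \<and>
            (\<forall>r p. c (r, p) \<in> Om r p) \<and> x = (\<Sum>rp\<in>{rp. c rp \<noteq> 0}. c rp)) \<and>
     (\<forall>r p s q x y. p < 2 \<longrightarrow> q < 2 \<longrightarrow> x \<in> Om r p \<longrightarrow> y \<in> Om s q \<longrightarrow>
        wedge x y \<in> Om (r + s) ((p + q) mod 2) \<and>
        wedge x y = eps (int r * int s + int p * int q) *\<^sub>R wedge y x) \<and>
     linear iota \<and> inj iota \<and> iota 1 = one \<and>
     (\<forall>a b. iota (a * b) = wedge (iota a) (iota b)) \<and>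
     (\<forall>n. iota ` Agr n \<subseteq> Om 0 (par n)) \<and> (\<forall>p. Om 0 p \<subseteq> range iota) \<and>
     linear d \<and> (\<forall>r p. d ` Om r p \<subseteq> Om (Suc r) p) \<and> (\<forall>x. d (d x) = 0) \<and>
     (\<forall>r p x y. p < 2 \<longrightarrow> x \<in> Om r p \<longrightarrow>
        d (wedge x y) = wedge (d x) y + eps (int r) *\<^sub>R wedge x (d y)) \<and>
     UNIV = span (range (\<lambda>(a0, as). gen_form wedge one iota d a0 as))"

definition bihom :: "(nat \<Rightarrow> nat \<Rightarrow> 'w set) \<Rightarrow> nat \<Rightarrow> nat \<Rightarrow> 'w \<Rightarrow> bool" where
  "bihom Om r p x \<longleftrightarrow> p < 2 \<and> x \<in> Om r p"

definition gerstenhaber_superbracket ::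
  "(nat \<Rightarrow> nat \<Rightarrow> 'w::real_vector set) \<Rightarrow> ('w \<Rightarrow> 'w \<Rightarrow> 'w) \<Rightarrow> ('w \<Rightarrow> 'w \<Rightarrow> 'w) \<Rightarrow> bool" where
  "gerstenhaber_superbracket Om wedge br \<longleftrightarrow>
     (\<forall>x. linear (br x)) \<and> (\<forall>y. linear (\<lambda>x. br x y)) \<and>
     (\<forall>r p s q x y. bihom Om r p x \<longrightarrow> bihom Om s q y \<longrightarrow>
        (if r + s = 0 then br x y = 0 else br x y \<in> Om (r + s - 1) ((p + q) mod 2))) \<and>
     (\<forall>r p s q x y. bihom Om r p x \<longrightarrow> bihom Om s q y \<longrightarrow>
        br x y = - (eps ((int r - 1) * (int s - 1) + int p * int q) *\<^sub>R br y x)) \<and>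
     (\<forall>r p s q t u x y z. bihom Om r p x \<longrightarrow> bihom Om s q y \<longrightarrow> bihom Om t u z \<longrightarrow>
        br x (br y z) = br (br x y) z
          + eps ((int r - 1) * (int s - 1) + int p * int q) *\<^sub>R br y (br x z)) \<and>
     (\<forall>r p s q t u x y z. bihom Om r p x \<longrightarrow> bihom Om s q y \<longrightarrow> bihom Om t u z \<longrightarrow>
        br x (wedge y z) = wedge (br x y) z
          + eps ((int r - 1) * int s + int p * int q) *\<^sub>R wedge y (br x z))"

definition differential_bracket ::
  "(nat \<Rightarrow> nat \<Rightarrow> 'w::real_vector set) \<Rightarrow> ('w \<Rightarrow> 'w) \<Rightarrow> ('w \<Rightarrow> 'w \<Rightarrow> 'w) \<Rightarrow> bool" where
  "differential_bracket Om d br \<longleftrightarrow>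
     (\<forall>r p s q x y. bihom Om r p x \<longrightarrow> bihom Om s q y \<longrightarrow>
        d (br x y) = br (d x) y + eps (int r - 1) *\<^sub>R br x (d y))"

definition poisson_superalgebra ::
  "(int \<Rightarrow> 'a::real_algebra_1 set) \<Rightarrow> ('a \<Rightarrow> 'a \<Rightarrow> 'a) \<Rightarrow> bool" where
  "poisson_superalgebra Agr P \<longleftrightarrow>
     (\<forall>f. linear (P f)) \<and> (\<forall>g. linear (\<lambda>f. P f g)) \<and>
     (\<forall>m n f g. f \<in> Agr m \<longrightarrow> g \<in> Agr n \<longrightarrow> P f g \<in> Apar Agr (par (m + n))) \<and>
     (\<forall>m n f g. f \<in> Agr m \<longrightarrow> g \<in> Agr n \<longrightarrow> P f g = - (eps (m * n) *\<^sub>R P g f)) \<and>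
     (\<forall>m n k f g h. f \<in> Agr m \<longrightarrow> g \<in> Agr n \<longrightarrow> h \<in> Agr k \<longrightarrow>
        P f (P g h) = P (P f g) h + eps (m * n) *\<^sub>R P g (P f h)) \<and>
     (\<forall>m n k f g h. f \<in> Agr m \<longrightarrow> g \<in> Agr n \<longrightarrow> h \<in> Agr k \<longrightarrow>
        P f (g * h) = P f g * h + eps (m * n) *\<^sub>R (g * P f h))"

end

theory Submission
  imports Defs
begin

text \<open>
  For the forward direction take \<open>{f,g} := [f, d g]\<close>. The bracket of two functions vanishes
  for degree reasons, so the differential property applied to \<open>(f, g)\<close> gives \<open>[d f, g] = [f, d g]\<close>
  and applied to \<open>(f, d g)\<close> gives \<open>[d f, d g] = d {f,g}\<close>. Since \<open>{f,g}\<close> has form degree 0 it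
  lies in \<open>\<A>\<close>, and antisymmetry, the Jacobi identity and the Leibniz rule of the bracket,
  evaluated on \<open>f\<close>, \<open>d g\<close>, \<open>d h\<close> (and \<open>d (g h) = d g \<wedge> h + g \<wedge> d h\<close>), become those of \<open>{-,-}\<close>.

  For the converse consider the defect \<open>D(x,y) = d[x,y] - [d x,y] - (-1)^(|x|-1) [x, d y]\<close>.
  It is linear in \<open>y\<close>, graded antisymmetric up to a sign, and, by the Leibniz rules for \<open>d\<close> and
  the bracket, vanishes on \<open>y \<wedge> z\<close> whenever it vanishes on \<open>y\<close> and on \<open>z\<close>. The hypotheses say
  exactly that it vanishes on pairs of generators \<open>f\<close>, \<open>d f\<close>. As every superform is a linear
  combination of wedge products of generators, \<open>D(x, -) = 0\<close> for every generator \<open>x\<close>; by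
  antisymmetry \<open>D(y, x) = 0\<close> for such \<open>x\<close> and arbitrary \<open>y\<close>, and the same argument once more
  gives \<open>D = 0\<close>.
\<close>

lemma eps_nonzero: "eps k \<noteq> 0"
  by (simp add: eps_def)

lemma eps_mult_par: "eps (m * n) = eps (int (par m) * int (par n))"
  by (simp add: eps_def par_def even_mult_iff)

lemma par_less_2: "par n < 2"
  by (simp add: par_def)

lemma par_add: "(par m + par n) mod 2 = par (m + n)"
proof -
  have "m mod 2 = 0 \<or> m mod 2 = 1" "n mod 2 = 0 \<or> n mod 2 = 1" by presburger+
  moreover have "(m + n) mod 2 = (m mod 2 + n mod 2) mod 2" by (simp add: mod_add_eq)
  ultimately show ?thesis unfolding par_def by auto
qed

lemma bilinear_span_in_subspace:
  fixes B :: "'a::real_vector \<Rightarrow> 'b::real_vector \<Rightarrow> 'c::real_vector"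
  assumes "\<And>x. linear (B x)" and "\<And>y. linear (\<lambda>x. B x y)"
    and "x \<in> span X" and "y \<in> span Y" and "subspace S"
    and "\<And>a b. a \<in> X \<Longrightarrow> b \<in> Y \<Longrightarrow> B a b \<in> S"
  shows "B x y \<in> S"
proof -
  have "B a y \<in> S" if "a \<in> X" for a
  proof -
    have "subspace {y. B a y \<in> S}"
      using linear_subspace_vimage[OF assms(1) assms(5)] by (simp add: vimage_def)
    then show ?thesis using span_induct[OF assms(4), of "\<lambda>y. B a y \<in> S"] assms(6) that by blast
  qed
  moreover have "subspace {x. B x y \<in> S}"
    using linear_subspace_vimage[OF assms(2) assms(5)] by (simp add: vimage_def)
  ultimately show ?thesis using span_induct[OF assms(3), of "\<lambda>x. B x y \<in> S"] by blast
qed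

lemma linear_through_injective:
  assumes "linear i" and "inj i" and "linear L" and "\<And>x. i (h x) = L x"
  shows "linear h"
proof (rule linearI)
  fix a b show "h (a + b) = h a + h b"
    using assms(4)[of "a + b"] assms(4)[of a] assms(4)[of b] assms(2)
      linear_add[OF assms(3)] linear_add[OF assms(1)]
    by (metis injD)
next
  fix c a show "h (c *\<^sub>R a) = c *\<^sub>R h a"
    using assms(4)[of "c *\<^sub>R a"] assms(4)[of a] assms(2)
      linear_scale[OF assms(3)] linear_scale[OF assms(1)]
    by (metis injD)
qed

locale superform_bracket =
  fixes Agr :: "int \<Rightarrow> 'a::real_algebra_1 set"
    and wedge :: "'w::real_vector \<Rightarrow> 'w \<Rightarrow> 'w" and one :: 'w
    and Om :: "nat \<Rightarrow> nat \<Rightarrow> 'w set" and iota :: "'a \<Rightarrow> 'w" and d :: "'w \<Rightarrow> 'w"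
    and br :: "'w \<Rightarrow> 'w \<Rightarrow> 'w"
  assumes graded: "graded_comm_algebra Agr"
    and superforms: "superform_algebra Agr wedge one Om iota d"
    and gerstenhaber: "gerstenhaber_superbracket Om wedge br"
begin

lemma Agr_decomposition:
  "\<exists>c::int \<Rightarrow> 'a. finite {n. c n \<noteq> 0} \<and> (\<forall>n. c n \<in> Agr n) \<and> a = (\<Sum>n\<in>{n. c n \<noteq> 0}. c n)"
  using graded unfolding graded_comm_algebra_def by metis

lemma one_Agr: "1 \<in> Agr 0"
  using graded unfolding graded_comm_algebra_def by (elim conjE) blast

lemma wedge_linear: "linear (wedge x)" and wedge_linear_left: "linear (\<lambda>x. wedge x y)"
  using superforms unfolding superform_algebra_def by (elim conjE, metis)+

lemma Om_subspace: "subspace (Om r p)"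
  using superforms unfolding superform_algebra_def by (elim conjE) blast

lemma Om_decomposition_unique:
  "\<exists>!c::nat \<times> nat \<Rightarrow> 'w. finite {rp. c rp \<noteq> 0} \<and> (\<forall>r p. c (r, p) \<in> Om r p)
     \<and> x = (\<Sum>rp\<in>{rp. c rp \<noteq> 0}. c rp)"
  using superforms unfolding superform_algebra_def by (elim conjE) (erule allE, assumption)+

lemma wedge_Om: "p < 2 \<Longrightarrow> q < 2 \<Longrightarrow> x \<in> Om r p \<Longrightarrow> y \<in> Om s q \<Longrightarrow>
    wedge x y \<in> Om (r + s) ((p + q) mod 2)"
  using superforms unfolding superform_algebra_def by (elim conjE) meson

lemma iota_linear: "linear iota" and iota_inj: "inj iota" and iota_one: "iota 1 = one"
  and iota_mult: "iota (a * b) = wedge (iota a) (iota b)"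
  using superforms unfolding superform_algebra_def by (elim conjE, blast)+

lemma iota_Agr: "f \<in> Agr n \<Longrightarrow> iota f \<in> Om 0 (par n)"
  using superforms unfolding superform_algebra_def by (elim conjE) (metis image_subset_iff)

lemma Om0_subset_range_iota: "Om 0 p \<subseteq> range iota"
  using superforms unfolding superform_algebra_def by (elim conjE) metis

lemma d_linear: "linear d" and d_d [simp]: "d (d x) = 0"
  using superforms unfolding superform_algebra_def by (elim conjE, blast)+

lemma d_Om: "x \<in> Om r p \<Longrightarrow> d x \<in> Om (Suc r) p"
  using superforms unfolding superform_algebra_def by (elim conjE) (metis image_subset_iff)

lemma d_wedge: "p < 2 \<Longrightarrow> x \<in> Om r p \<Longrightarrow>
    d (wedge x y) = wedge (d x) y + eps (int r) *\<^sub>R wedge x (d y)"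
  using superforms unfolding superform_algebra_def by (elim conjE) meson

lemma span_gen_form: "span (range (\<lambda>(a0, as). gen_form wedge one iota d a0 as)) = UNIV"
  using superforms unfolding superform_algebra_def by (elim conjE) (erule sym)

lemma br_linear: "linear (br x)" and br_linear_left: "linear (\<lambda>x. br x y)"
  using gerstenhaber unfolding gerstenhaber_superbracket_def by (elim conjE, metis)+

lemma br_Om: "bihom Om r p x \<Longrightarrow> bihom Om s q y \<Longrightarrow>
    (if r + s = 0 then br x y = 0 else br x y \<in> Om (r + s - 1) ((p + q) mod 2))"
  using gerstenhaber unfolding gerstenhaber_superbracket_def by (elim conjE) metis

lemma br_antisym: "bihom Om r p x \<Longrightarrow> bihom Om s q y \<Longrightarrow>
    br x y = - (eps ((int r - 1) * (int s - 1) + int p * int q) *\<^sub>R br y x)"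
  using gerstenhaber unfolding gerstenhaber_superbracket_def by (elim conjE) meson

lemma br_jacobi: "bihom Om r p x \<Longrightarrow> bihom Om s q y \<Longrightarrow> bihom Om t u z \<Longrightarrow>
    br x (br y z) = br (br x y) z + eps ((int r - 1) * (int s - 1) + int p * int q) *\<^sub>R br y (br x z)"
  using gerstenhaber unfolding gerstenhaber_superbracket_def by (elim conjE) meson

lemma br_wedge: "bihom Om r p x \<Longrightarrow> bihom Om s q y \<Longrightarrow> bihom Om t u z \<Longrightarrow>
    br x (wedge y z) = wedge (br x y) z + eps ((int r - 1) * int s + int p * int q) *\<^sub>R wedge y (br x z)"
  using gerstenhaber unfolding gerstenhaber_superbracket_def by (elim conjE) meson

lemmas lin_simps =
  linear_add[OF wedge_linear] linear_add[OF wedge_linear_left]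
  linear_scale[OF wedge_linear] linear_scale[OF wedge_linear_left]
  linear_0[OF wedge_linear] linear_0[OF wedge_linear_left]
  linear_diff[OF wedge_linear] linear_diff[OF wedge_linear_left]
  linear_neg[OF wedge_linear] linear_neg[OF wedge_linear_left]
  linear_add[OF br_linear] linear_add[OF br_linear_left]
  linear_scale[OF br_linear] linear_scale[OF br_linear_left]
  linear_0[OF br_linear] linear_0[OF br_linear_left]
  linear_diff[OF br_linear] linear_diff[OF br_linear_left]
  linear_neg[OF br_linear] linear_neg[OF br_linear_left]
  linear_add[OF d_linear] linear_scale[OF d_linear] linear_0[OF d_linear]
  linear_diff[OF d_linear] linear_neg[OF d_linear]
  linear_add[OF iota_linear] linear_scale[OF iota_linear] linear_0[OF iota_linear]
  linear_diff[OF iota_linear] linear_neg[OF iota_linear]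

lemma iota_eqD: "iota a = iota b \<Longrightarrow> a = b"
  using iota_inj by (simp add: inj_eq)

lemma span_Agr: "span (\<Union>n. Agr n) = UNIV"
proof -
  have "a \<in> span (\<Union>n. Agr n)" for a
  proof -
    obtain c where c: "\<forall>n. c n \<in> Agr n" "a = (\<Sum>n\<in>{n. c n \<noteq> 0}. c n)"
      using Agr_decomposition by blast
    show ?thesis unfolding c(2) by (rule span_sum) (use c(1) in \<open>auto intro: span_base\<close>)
  qed
  then show ?thesis by auto
qed

lemma bihom_iota: "f \<in> Agr n \<Longrightarrow> bihom Om 0 (par n) (iota f)"
  by (simp add: bihom_def par_less_2 iota_Agr)

lemma bihom_d: "bihom Om r p x \<Longrightarrow> bihom Om (Suc r) p (d x)"
  by (simp add: bihom_def d_Om)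

lemma bihom_d_iota: "f \<in> Agr n \<Longrightarrow> bihom Om 1 (par n) (d (iota f))"
  using bihom_d[OF bihom_iota] by simp

lemma bilinear_eq_0_if_homogeneous:
  assumes "\<And>f. linear (B f)" "\<And>g. linear (\<lambda>f. B f g)"
    and "\<And>f g m n. f \<in> Agr m \<Longrightarrow> g \<in> Agr n \<Longrightarrow> B f g = 0"
  shows "B f g = (0::'w)"
proof -
  have "B f g \<in> {0}"
    by (rule bilinear_span_in_subspace[OF assms(1,2), of f "\<Union>n. Agr n" g "\<Union>n. Agr n"])
       (use span_Agr assms(3) in \<open>auto simp: subspace_single_0\<close>)
  then show ?thesis by simp
qed

lemma Om_parity_disjoint:
  assumes "p \<noteq> p'" "v \<in> Om r p" "v \<in> Om r p'"
  shows "v = 0"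
proof (rule ccontr)
  assume "v \<noteq> 0"
  define c where "c (p'' :: nat) = (\<lambda>rp. if rp = (r, p'') then v else 0)" for p''
  have "{rp. c p'' rp \<noteq> 0} = {(r, p'')}" for p''
    using \<open>v \<noteq> 0\<close> by (auto simp: c_def)
  then have "finite {rp. c p'' rp \<noteq> 0} \<and> (\<forall>r p. c p'' (r, p) \<in> Om r p)
      \<and> v = (\<Sum>rp\<in>{rp. c p'' rp \<noteq> 0}. c p'' rp)" if "v \<in> Om r p''" for p''
    using that subspace_0[OF Om_subspace] by (auto simp: c_def)
  then have "c p = c p'"
    using Om_decomposition_unique[of v] assms(2,3) by blast
  then show False
    using \<open>v \<noteq> 0\<close> assms(1) unfolding c_def by (metis prod.inject)
qed

text \<open>The parity of a function is read off from its image in \<open>\<Omega>\<^sup>0\<close>: split it into its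
  homogeneous components of the right and of the wrong parity; the latter sum lies in both
  parity parts of \<open>\<Omega>\<^sup>0\<close>, hence vanishes.\<close>
lemma Apar_if_iota_Om0:
  assumes p: "p < 2" and z: "iota z \<in> Om 0 p"
  shows "z \<in> Apar Agr p"
proof -
  obtain c where c: "finite {n. c n \<noteq> 0}" "\<forall>n. c n \<in> Agr n" "z = (\<Sum>n\<in>{n. c n \<noteq> 0}. c n)"
    using Agr_decomposition by blast
  define N where "N = {n. c n \<noteq> 0}"
  define B where "B = {n. par n = p}"
  define z0 where "z0 = (\<Sum>n\<in>N \<inter> B. c n)"
  define z1 where "z1 = (\<Sum>n\<in>N - B. c n)"
  have z_split: "z = z0 + z1" unfolding z0_def z1_def c(3) N_def[symmetric]
    by (rule sum.Int_Diff) (simp add: N_def c(1))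
  have z0_Apar: "z0 \<in> Apar Agr p" unfolding z0_def Apar_def
    by (rule span_sum) (use c(2) in \<open>auto simp: B_def intro!: span_base\<close>)
  have "iota z0 \<in> Om 0 p" unfolding z0_def linear_sum[OF iota_linear]
    by (rule subspace_sum[OF Om_subspace]) (use c(2) iota_Agr in \<open>auto simp: B_def\<close>)
  moreover have "iota z1 = iota z - iota z0"
    using z_split by (simp add: lin_simps)
  ultimately have "iota z1 \<in> Om 0 p"
    using z subspace_diff[OF Om_subspace] by simp
  moreover have "iota z1 \<in> Om 0 (1 - p)" unfolding z1_def linear_sum[OF iota_linear]
  proof (rule subspace_sum[OF Om_subspace])
    fix n assume "n \<in> N - B"
    then have "par n = 1 - p" using par_less_2[of n] p by (auto simp: B_def)
    then show "iota (c n) \<in> Om 0 (1 - p)" using iota_Agr c(2) by metis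
  qed
  moreover have "p \<noteq> 1 - p"
    using p by presburger
  ultimately have "iota z1 = 0"
    using Om_parity_disjoint by blast
  then have "z1 = 0" using iota_eqD[of z1 0] by (simp add: lin_simps)
  then show ?thesis using z_split z0_Apar by simp
qed

subsection \<open>The Poisson bracket of a differential Gerstenhaber bracket\<close>

lemma br_iota_d_iota_bilinear:
  "linear (\<lambda>g. br (iota f) (d (iota g)))" "linear (\<lambda>f. br (iota f) (d (iota g)))"
  by (rule linearI; simp add: lin_simps)+

lemma br_iota_iota_bilinear:
  "linear (\<lambda>g. br (iota f) (iota g))" "linear (\<lambda>f. br (iota f) (iota g))"
  by (rule linearI; simp add: lin_simps)+

lemma br_iota_iota: "br (iota f) (iota g) = 0"
  by (rule bilinear_eq_0_if_homogeneous[OF br_iota_iota_bilinear])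
     (use br_Om[OF bihom_iota bihom_iota] in auto)

lemma br_iota_d_iota_in_range: "br (iota f) (d (iota g)) \<in> range iota"
proof -
  have "br (iota f) (d (iota g)) \<in> range iota" if "f \<in> Agr m" "g \<in> Agr n" for f g m n
    using br_Om[OF bihom_iota[OF that(1)] bihom_d_iota[OF that(2)]] Om0_subset_range_iota by auto
  then show ?thesis
    by (intro bilinear_span_in_subspace[OF br_iota_d_iota_bilinear, of f "\<Union>n. Agr n" g "\<Union>n. Agr n"])
       (use span_Agr linear_subspace_image[OF iota_linear subspace_UNIV] in auto)
qed

lemma poisson_superalgebra_of_br:
  assumes P: "\<And>f g. iota (P f g) = br (iota f) (d (iota g))"
    and symm: "\<And>f g. br (d (iota f)) (iota g) = br (iota f) (d (iota g))"
    and d_P: "\<And>f g. br (d (iota f)) (d (iota g)) = d (br (iota f) (d (iota g)))"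
  shows "poisson_superalgebra Agr P"
  unfolding poisson_superalgebra_def
proof (intro conjI allI impI)
  fix f show "linear (P f)"
    by (rule linear_through_injective[OF iota_linear iota_inj br_iota_d_iota_bilinear(1) P])
next
  fix g show "linear (\<lambda>f. P f g)"
    by (rule linear_through_injective[OF iota_linear iota_inj br_iota_d_iota_bilinear(2)]) (rule P)
next
  fix m n f g assume "f \<in> Agr m" "g \<in> Agr n"
  then show "P f g \<in> Apar Agr (par (m + n))"
    using br_Om[OF bihom_iota bihom_d_iota] Apar_if_iota_Om0[OF par_less_2]
    by (simp add: P par_add)
next
  fix m n f g assume f: "f \<in> Agr m" and g: "g \<in> Agr n"
  have "iota (P f g) = iota (- (eps (m * n) *\<^sub>R P g f))"
    using br_antisym[OF bihom_iota[OF f] bihom_d_iota[OF g]]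
    by (simp add: P symm lin_simps eps_mult_par[of m n])
  then show "P f g = - (eps (m * n) *\<^sub>R P g f)" by (rule iota_eqD)
next
  fix m n k f g h assume f: "f \<in> Agr m" and g: "g \<in> Agr n" and h: "h \<in> Agr k"
  have "iota (P f (P g h)) = br (iota f) (br (d (iota g)) (d (iota h)))"
    by (simp add: P d_P)
  also have "\<dots> = br (br (iota f) (d (iota g))) (d (iota h))
      + eps (int (par m) * int (par n)) *\<^sub>R br (d (iota g)) (br (iota f) (d (iota h)))"
    using br_jacobi[OF bihom_iota[OF f] bihom_d_iota[OF g] bihom_d_iota[OF h]] by simp
  also have "\<dots> = iota (P (P f g) h + eps (m * n) *\<^sub>R P g (P f h))"
    by (simp add: P[symmetric] symm lin_simps eps_mult_par[of m n])
  finally show "P f (P g h) = P (P f g) h + eps (m * n) *\<^sub>R P g (P f h)" by (rule iota_eqD)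
next
  fix m n k f g h assume f: "f \<in> Agr m" and g: "g \<in> Agr n" and h: "h \<in> Agr k"
  have "iota (P f (g * h))
      = br (iota f) (wedge (d (iota g)) (iota h)) + br (iota f) (wedge (iota g) (d (iota h)))"
    using d_wedge[OF par_less_2 iota_Agr[OF g], of "iota h"] by (simp add: P iota_mult lin_simps eps_def)
  also have "\<dots> = wedge (br (iota f) (d (iota g))) (iota h)
      + eps (int (par m) * int (par n)) *\<^sub>R wedge (iota g) (br (iota f) (d (iota h)))"
    using br_wedge[OF bihom_iota[OF f] bihom_d_iota[OF g] bihom_iota[OF h]]
      br_wedge[OF bihom_iota[OF f] bihom_iota[OF g] bihom_d_iota[OF h]]
    by (simp add: br_iota_iota lin_simps)
  also have "\<dots> = iota (P f g * h + eps (m * n) *\<^sub>R (g * P f h))"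
    by (simp add: P iota_mult lin_simps eps_mult_par[of m n])
  finally show "P f (g * h) = P f g * h + eps (m * n) *\<^sub>R (g * P f h)" by (rule iota_eqD)
qed

definition associated_bracket :: "('a \<Rightarrow> 'a \<Rightarrow> 'a) \<Rightarrow> bool" where
  "associated_bracket P \<longleftrightarrow>
     (\<forall>f g. br (iota f) (iota g) = 0 \<and>
            br (iota f) (d (iota g)) = iota (P f g) \<and>
            br (d (iota f)) (iota g) = iota (P f g) \<and>
            br (d (iota f)) (d (iota g)) = d (iota (P f g)))"

lemma differential_bracket_imp_poisson:
  assumes "differential_bracket Om d br"
  shows "\<exists>P. poisson_superalgebra Agr P \<and> associated_bracket P"
proof -
  have diff: "d (br x y) = br (d x) y + eps (int r - 1) *\<^sub>R br x (d y)"
    if "bihom Om r p x" "bihom Om s q y" for r p s q x y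
    using assms that unfolding differential_bracket_def by blast
  define P where "P f g = inv iota (br (iota f) (d (iota g)))" for f g
  have iota_P: "iota (P f g) = br (iota f) (d (iota g))" for f g
    unfolding P_def using br_iota_d_iota_in_range by (simp add: f_inv_into_f)
  have "br (d (iota f)) (iota g) - br (iota f) (d (iota g)) = 0" for f g
  proof (rule bilinear_eq_0_if_homogeneous)
    fix f g m n assume "f \<in> Agr m" "g \<in> Agr n"
    then show "br (d (iota f)) (iota g) - br (iota f) (d (iota g)) = 0"
      using diff[OF bihom_iota bihom_iota] br_iota_iota by (simp add: eps_def lin_simps)
  qed (rule linearI; simp add: lin_simps algebra_simps)+
  then have symm: "br (d (iota f)) (iota g) = br (iota f) (d (iota g))" for f g
    by simp
  have "br (d (iota f)) (d (iota g)) - d (br (iota f) (d (iota g))) = 0" for f g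
  proof (rule bilinear_eq_0_if_homogeneous)
    fix f g m n assume "f \<in> Agr m" "g \<in> Agr n"
    then show "br (d (iota f)) (d (iota g)) - d (br (iota f) (d (iota g))) = 0"
      using diff[OF bihom_iota bihom_d_iota] by (simp add: lin_simps)
  qed (rule linearI; simp add: lin_simps algebra_simps)+
  then have d_P: "br (d (iota f)) (d (iota g)) = d (br (iota f) (d (iota g)))" for f g
    by simp
  have "associated_bracket P"
    unfolding associated_bracket_def using br_iota_iota symm d_P iota_P by simp
  with poisson_superalgebra_of_br[OF iota_P symm d_P] show ?thesis
    by blast
qed

subsection \<open>Differentiality is checked on generators\<close>

definition d_defect :: "nat \<Rightarrow> 'w \<Rightarrow> 'w \<Rightarrow> 'w" where
  "d_defect r x y = d (br x y) - br (d x) y - eps (int r - 1) *\<^sub>R br x (d y)"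

lemma linear_d_defect: "linear (d_defect r x)"
  by (rule linearI) (simp_all add: d_defect_def lin_simps algebra_simps)

lemma d_wedge_br:
  assumes x: "bihom Om r p x" and y: "bihom Om s q y"
  shows "d (wedge (br x y) z) = wedge (d (br x y)) z + eps (int r + int s - 1) *\<^sub>R wedge (br x y) (d z)"
proof (cases "r + s = 0")
  case True
  then show ?thesis using br_Om[OF x y] by (simp add: lin_simps)
next
  case False
  have "br x y \<in> Om (r + s - 1) ((p + q) mod 2)"
    using br_Om[OF x y] by (simp only: False if_False)
  moreover have "int (r + s - 1) = int r + int s - 1"
    using False by linarith
  ultimately show ?thesis
    using d_wedge[of "(p + q) mod 2" "br x y"] by simp
qed

lemma d_defect_wedge:
  assumes x: "bihom Om r p x" and y: "bihom Om s q y" and z: "bihom Om t u z"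
    and "d_defect r x y = 0" and "d_defect r x z = 0"
  shows "d_defect r x (wedge y z) = 0"
proof -
  define e where "e = eps (int r - 1)"
  define E where "E = eps (int s)"
  define A where "A = eps ((int r - 1) * int s + int p * int q)"
  define B where "B = eps ((int r - 1) * (int s + 1) + int p * int q)"
  define C where "C = eps (int r * int s + int p * int q)"
  have d_br_y: "d (br x y) = br (d x) y + e *\<^sub>R br x (d y)"
    and d_br_z: "d (br x z) = br (d x) z + e *\<^sub>R br x (d z)"
    using assms(4,5) by (simp_all add: d_defect_def e_def algebra_simps)
  have y_Om: "y \<in> Om s q" "q < 2" using y by (auto simp: bihom_def)
  have d_y_z: "d (wedge y z) = wedge (d y) z + E *\<^sub>R wedge y (d z)"
    and d_y_br: "d (wedge y (br x z)) = wedge (d y) (br x z) + E *\<^sub>R wedge y (d (br x z))"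
    unfolding E_def using d_wedge[OF y_Om(2,1)] by simp_all
  have br_y_z: "br x (wedge y z) = wedge (br x y) z + A *\<^sub>R wedge y (br x z)"
    and br_y_dz: "br x (wedge y (d z)) = wedge (br x y) (d z) + A *\<^sub>R wedge y (br x (d z))"
    unfolding A_def using br_wedge[OF x y z] br_wedge[OF x y bihom_d[OF z]] by simp_all
  have br_dx: "br (d x) (wedge y z) = wedge (br (d x) y) z + C *\<^sub>R wedge y (br (d x) z)"
    unfolding C_def using br_wedge[OF bihom_d[OF x] y z] by simp
  have br_dy: "br x (wedge (d y) z) = wedge (br x (d y)) z + B *\<^sub>R wedge (d y) (br x z)"
    unfolding B_def using br_wedge[OF x bihom_d[OF y] z] by (simp add: add.commute)
  have signs: "eps (int r + int s - 1) = e * E" "A = e * B" "C = e * B * E"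
    unfolding e_def E_def A_def B_def C_def by (auto simp: eps_def even_mult_iff)
  show ?thesis
    unfolding d_defect_def e_def[symmetric] d_y_z br_y_z br_dx
    by (simp add: lin_simps d_wedge_br[OF x y] d_y_br br_dy br_y_dz d_br_y d_br_z signs algebra_simps)
qed

lemma d_defect_swap:
  assumes x: "bihom Om r p x" and y: "bihom Om s q y" and "d_defect r x y = 0"
  shows "d_defect s y x = 0"
proof -
  define S where "S = eps ((int r - 1) * (int s - 1) + int p * int q)"
  define G where "G = eps (int r * (int s - 1) + int p * int q)"
  define K where "K = eps ((int r - 1) * int s + int p * int q)"
  have antisym: "br x y = - (S *\<^sub>R br y x)" "br (d x) y = - (G *\<^sub>R br y (d x))"
    "br x (d y) = - (K *\<^sub>R br (d y) x)"
    unfolding S_def G_def K_def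
    using br_antisym[OF x y] br_antisym[OF bihom_d[OF x] y] br_antisym[OF x bihom_d[OF y]] by simp_all
  have signs: "G = S * eps (int s - 1)" "S = eps (int r - 1) * K"
    unfolding G_def S_def K_def by (auto simp: eps_def even_mult_iff)
  have "d_defect r x y = - (S *\<^sub>R d_defect s y x)"
    unfolding d_defect_def antisym by (simp add: lin_simps signs algebra_simps)
  then show ?thesis
    using assms(3) eps_nonzero[of "(int r - 1) * (int s - 1) + int p * int q"] by (simp add: S_def)
qed

definition generator :: "nat \<Rightarrow> nat \<Rightarrow> 'w \<Rightarrow> bool" where
  "generator r p x \<longleftrightarrow>
     (\<exists>n f. f \<in> Agr n \<and> p = par n \<and> (r = 0 \<and> x = iota f \<or> r = 1 \<and> x = d (iota f)))"

inductive gen_product :: "nat \<Rightarrow> nat \<Rightarrow> 'w \<Rightarrow> bool" where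
  gen_product_one: "gen_product 0 0 one"
| gen_product_wedge: "generator r p x \<Longrightarrow> gen_product s q w \<Longrightarrow>
    gen_product (r + s) ((p + q) mod 2) (wedge x w)"

lemma bihom_generator: "generator r p x \<Longrightarrow> bihom Om r p x"
  unfolding generator_def using bihom_iota bihom_d_iota by auto

lemma generator_one: "generator 0 0 one"
  unfolding generator_def using one_Agr iota_one by (metis par_def mod_0 nat_zero_as_int)

lemma bihom_gen_product: "gen_product r p w \<Longrightarrow> bihom Om r p w"
proof (induction rule: gen_product.induct)
  case gen_product_one
  then show ?case using bihom_generator[OF generator_one] .
next
  case (gen_product_wedge r p x s q w)
  then show ?case using bihom_generator wedge_Om by (auto simp: bihom_def)
qed

lemma d_defect_gen_product:
  assumes x: "bihom Om r p x" and gen: "\<And>s q g. generator s q g \<Longrightarrow> d_defect r x g = 0"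
  shows "gen_product s q w \<Longrightarrow> d_defect r x w = 0"
proof (induction rule: gen_product.induct)
  case gen_product_one
  then show ?case using gen[OF generator_one] .
next
  case (gen_product_wedge r' p' g s q w)
  then show ?case
    using d_defect_wedge[OF x bihom_generator bihom_gen_product] gen by blast
qed

lemma span_gen_product: "span {w. \<exists>r p. gen_product r p w} = UNIV"
proof -
  define X where "X = {x. \<exists>r p. generator r p x}"
  define G where "G = {w. \<exists>r p. gen_product r p w}"
  have wedge_span: "wedge x w \<in> span G" if "x \<in> span X" "w \<in> span G" for x w
    by (rule bilinear_span_in_subspace[OF wedge_linear wedge_linear_left that subspace_span])
       (auto simp: X_def G_def intro: span_base gen_product_wedge)
  have generators: "iota ` (\<Union>n. Agr n) \<subseteq> X" "(d \<circ> iota) ` (\<Union>n. Agr n) \<subseteq> X"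
    unfolding X_def generator_def by auto
  have iota_span: "iota a \<in> span X" for a
    using span_mono[OF generators(1)] span_linear_image[OF iota_linear] span_Agr by auto
  have d_iota_span: "d (iota a) \<in> span X" for a
    using span_mono[OF generators(2)] span_linear_image[OF linear_compose[OF iota_linear d_linear]]
      span_Agr by auto
  have "one \<in> span G"
    by (auto simp: G_def intro: span_base gen_product_one)
  then have "foldr (\<lambda>a w. wedge (d (iota a)) w) as one \<in> span G" for as
    by (induction as) (simp_all add: wedge_span d_iota_span)
  then have "gen_form wedge one iota d a0 as \<in> span G" for a0 as
    unfolding gen_form_def by (intro wedge_span iota_span)
  then have "span (range (\<lambda>(a0, as). gen_form wedge one iota d a0 as)) \<subseteq> span G"
    by (intro span_minimal) (auto simp: subspace_span)
  then show ?thesis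
    using span_gen_form by (auto simp: G_def)
qed

lemma d_defect_eq_0_if_gen_product:
  assumes "\<And>s q w. gen_product s q w \<Longrightarrow> d_defect r x w = 0"
  shows "d_defect r x y = 0"
  using linear_eq_on_span[OF linear_d_defect[of r x] linear_zero, of "{w. \<exists>s q. gen_product s q w}" y]
    span_gen_product assms by auto

lemma differential_bracket_if_associated:
  assumes "associated_bracket P"
  shows "differential_bracket Om d br"
proof -
  have assoc: "br (iota f) (iota g) = 0" "br (iota f) (d (iota g)) = iota (P f g)"
    "br (d (iota f)) (iota g) = iota (P f g)" "br (d (iota f)) (d (iota g)) = d (iota (P f g))"
    for f g
    using assms unfolding associated_bracket_def by blast+
  have on_generators: "d_defect r x y = 0"
    if gen: "generator r p x" "generator s q y" for r p x s q y
  proof -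
    obtain f g where "r = 0 \<and> x = iota f \<or> r = 1 \<and> x = d (iota f)"
      and "y = iota g \<or> y = d (iota g)"
      using gen unfolding generator_def by blast
    then show ?thesis
      unfolding d_defect_def by (elim disjE conjE) (simp_all add: assoc eps_def lin_simps)
  qed
  have d_defect_generator_left: "d_defect r x y = 0" if "generator r p x" for r p x y
    by (rule d_defect_eq_0_if_gen_product,
        rule d_defect_gen_product[OF bihom_generator[OF that] on_generators[OF that]])
  have d_defect_0: "d_defect r x y = 0" if "bihom Om r p x" for r p x y
    by (rule d_defect_eq_0_if_gen_product, rule d_defect_gen_product[OF that])
       (rule d_defect_swap[OF bihom_generator that d_defect_generator_left])
  show ?thesis
    unfolding differential_bracket_def
  proof (intro allI impI)
    fix r p s q x y
    assume "bihom Om r p x"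
    from d_defect_0[OF this, of y]
    show "d (br x y) = br (d x) y + eps (int r - 1) *\<^sub>R br x (d y)"
      unfolding d_defect_def by (simp add: algebra_simps)
  qed
qed

end

theorem mainTheorem6:
  fixes Agr :: "int \<Rightarrow> 'a::real_algebra_1 set"
    and wedge :: "'w::real_vector \<Rightarrow> 'w \<Rightarrow> 'w" and one :: 'w
    and Om :: "nat \<Rightarrow> nat \<Rightarrow> 'w set" and iota :: "'a \<Rightarrow> 'w" and d :: "'w \<Rightarrow> 'w"
    and br :: "'w \<Rightarrow> 'w \<Rightarrow> 'w"
  assumes "graded_comm_algebra Agr"
    and "superform_algebra Agr wedge one Om iota d"
    and "gerstenhaber_superbracket Om wedge br"
  shows "differential_bracket Om d br \<longleftrightarrow>
    (\<exists>P. poisson_superalgebra Agr P \<and>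
       (\<forall>f g. br (iota f) (iota g) = 0 \<and>
              br (iota f) (d (iota g)) = iota (P f g) \<and>
              br (d (iota f)) (iota g) = iota (P f g) \<and>
              br (d (iota f)) (d (iota g)) = d (iota (P f g))))"
proof -
  interpret superform_bracket Agr wedge one Om iota d br
    using assms by unfold_locales
  show ?thesis
    unfolding associated_bracket_def[symmetric]
    using differential_bracket_imp_poisson differential_bracket_if_associated by blast
qed

end
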